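(* Let $\mathbb D=\{z\in\mathbb C:|z|\le1\}$ and let $B:\mathbb Z\times\mathbb Z\to\mathbb D$. For $n\in\mathbb Z$ and $l\in\{0,1,2,\ldots\}$ put $$s_n^B(l)=\Big(\frac{\pi}{\sqrt3}\Big)^l\Big(1-\frac{3}{\pi^2}\sum_{k\in\mathbb Z,\,k\neq n}\frac{|B(n,k)|^l}{(k-n)^2}\Big)$$ (with $|B(n,k)|^0=1$). Assume there is $l_0\in\{1,2,\ldots\}$ such that $s_n^B(l_0)=0$ for all $n\in\mathbb Z$. Then $|B(n,k)|=1$ for all $n,k\in\mathbb Z$ with $n\neq k$, and $s_n^B(l)=0$ for all $n\in\mathbb Z$ and all $l=0,1,2,\ldots$.
   Context: The sequence $(s_n^B(l))_{l}$ is called the $n$-th noise sequence of $B$. *)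

theory Defs
  imports "HOL-Analysis.Analysis"
begin

text \<open>The series is absolutely convergent
  (terms bounded by 1/(k-n)^2 when |B| \<le> 1), so the unordered sum infsum
  agrees with the paper's series. Note |B(n,k)|^0 = 1 by definition of ^.\<close>
definition noise_seq :: "(int \<Rightarrow> int \<Rightarrow> complex) \<Rightarrow> int \<Rightarrow> nat \<Rightarrow> real" where
  "noise_seq B n l = (pi / sqrt 3) ^ l *
     (1 - 3 / pi^2 * (\<Sum>\<^sub>\<infinity>k\<in>{k. k \<noteq> n}. norm (B n k) ^ l / (real_of_int (k - n))^2))"

end

theory Submission
  imports Defs
begin

text \<open>Shifting Euler's series gives \<open>\<Sum>\<^sub>k\<^sub>\<noteq>\<^sub>n 1/(k-n)\<^sup>2 = \<pi>\<^sup>2/3\<close>, so \<open>s\<^sub>n(l) = 0\<close> says exactly that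
  the weights \<open>|B(n,k)|\<^sup>l \<le> 1\<close> do not lower this sum. For \<open>l = l\<^sub>0 \<ge> 1\<close> this forces every weight,
  hence every \<open>|B(n,k)|\<close>, to be 1; then the weights are 1 for every \<open>l\<close>.\<close>

lemma has_sum_inverse_squares_nat: "((\<lambda>m::nat. 1 / (real m + 1)^2) has_sum pi^2/6) UNIV"
  using sums_nonneg_imp_has_sum[OF inverse_squares_sums] by (simp add: add.commute)

lemma has_sum_inverse_squares_above:
  "((\<lambda>k::int. 1 / (real_of_int (k - n))^2) has_sum pi^2/6) {k. k > n}"
proof -
  have "((\<lambda>m::nat. 1 / (real m + 1)^2) has_sum pi^2/6) UNIV
        = ((\<lambda>k::int. 1 / (real_of_int (k - n))^2) has_sum pi^2/6) {k. k > n}"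
    by (rule has_sum_reindex_bij_witness[where i="\<lambda>k. nat (k - n - 1)" and j="\<lambda>m. n + int m + 1"])
       auto
  with has_sum_inverse_squares_nat show ?thesis by simp
qed

lemma has_sum_inverse_squares_below:
  "((\<lambda>k::int. 1 / (real_of_int (k - n))^2) has_sum pi^2/6) {k. k < n}"
proof -
  have "((\<lambda>m::nat. 1 / (real m + 1)^2) has_sum pi^2/6) UNIV
        = ((\<lambda>k::int. 1 / (real_of_int (k - n))^2) has_sum pi^2/6) {k. k < n}"
    by (rule has_sum_reindex_bij_witness[where i="\<lambda>k. nat (n - k - 1)" and j="\<lambda>m. n - int m - 1"])
       (auto simp: power2_eq_square algebra_simps)
  with has_sum_inverse_squares_nat show ?thesis by simp
qed

lemma has_sum_inverse_squares_int:
  "((\<lambda>k::int. 1 / (real_of_int (k - n))^2) has_sum pi^2/3) {k. k \<noteq> n}"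
proof -
  have "((\<lambda>k::int. 1 / (real_of_int (k - n))^2) has_sum (pi^2/6 + pi^2/6)) ({k. k > n} \<union> {k. k < n})"
    by (rule has_sum_Un_disjoint[OF has_sum_inverse_squares_above has_sum_inverse_squares_below]) auto
  moreover have "{k. k > n} \<union> {k. k < n} = {k. k \<noteq> n}" by auto
  ultimately show ?thesis by simp
qed

lemma has_sum_le_same_sum_imp_eq:
  fixes f g :: "'a \<Rightarrow> 'b :: {ordered_ab_group_add, topological_ab_group_add, linorder_topology}"
  assumes "(f has_sum s) A" "(g has_sum s) A" "\<And>x. x \<in> A \<Longrightarrow> f x \<le> g x" "x \<in> A"
  shows "f x = g x"
proof (rule ccontr)
  assume "f x \<noteq> g x"
  with assms(3,4) have "f x < g x" by (simp add: order_less_le)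
  with has_sum_strict_mono[OF assms] show False by simp
qed

lemma noise_seq_eq_0_iff:
  "noise_seq B n l = 0 \<longleftrightarrow>
     (\<Sum>\<^sub>\<infinity>k\<in>{k. k \<noteq> n}. norm (B n k) ^ l / (real_of_int (k - n))^2) = pi^2/3"
proof -
  have "(pi / sqrt 3) ^ l \<noteq> 0" by simp
  moreover have "1 - 3 / pi^2 * S = 0 \<longleftrightarrow> S = pi^2/3" for S :: real
    by (auto simp: field_simps)
  ultimately show ?thesis unfolding noise_seq_def by simp
qed

lemma noise_terms_has_sum:
  assumes "\<And>k. norm (B n k) \<le> 1"
  shows "((\<lambda>k. norm (B n k) ^ l / (real_of_int (k - n))^2) has_sum
           (\<Sum>\<^sub>\<infinity>k\<in>{k. k \<noteq> n}. norm (B n k) ^ l / (real_of_int (k - n))^2)) {k. k \<noteq> n}"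
proof (rule has_sum_infsum, rule summable_on_comparison_test)
  show "(\<lambda>k. 1 / (real_of_int (k - n))^2) summable_on {k. k \<noteq> n}"
    using has_sum_inverse_squares_int by (rule has_sum_imp_summable)
  show "norm (B n k) ^ l / (real_of_int (k - n))^2 \<le> 1 / (real_of_int (k - n))^2" for k
    using assms by (simp add: divide_right_mono power_le_one)
qed simp

theorem proposition4p1:
  fixes B :: "int \<Rightarrow> int \<Rightarrow> complex" and l0 :: nat
  assumes disk: "\<And>n k. norm (B n k) \<le> 1"
    and l0_pos: "l0 \<ge> 1"
    and zero: "\<And>n. noise_seq B n l0 = 0"
  shows "(\<forall>n k. n \<noteq> k \<longrightarrow> norm (B n k) = 1) \<and> (\<forall>n l. noise_seq B n l = 0)"
proof -
  have unimodular: "norm (B n k) = 1" if "n \<noteq> k" for n k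
  proof -
    have "((\<lambda>k. norm (B n k) ^ l0 / (real_of_int (k - n))^2) has_sum pi^2/3) {k. k \<noteq> n}"
      using noise_terms_has_sum[of B n l0, OF disk] zero[of n] by (simp only: noise_seq_eq_0_iff)
    then have "norm (B n k) ^ l0 / (real_of_int (k - n))^2 = 1 / (real_of_int (k - n))^2"
      by (rule has_sum_le_same_sum_imp_eq[OF _ has_sum_inverse_squares_int])
         (use disk that in \<open>auto simp: divide_right_mono power_le_one\<close>)
    with that have "norm (B n k) ^ l0 = 1 ^ l0" by simp
    then show ?thesis by (rule power_eq_imp_eq_base) (use l0_pos in auto)
  qed
  have "noise_seq B n l = 0" for n l
  proof -
    have "(\<Sum>\<^sub>\<infinity>k\<in>{k. k \<noteq> n}. norm (B n k) ^ l / (real_of_int (k - n))^2)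
        = (\<Sum>\<^sub>\<infinity>k\<in>{k. k \<noteq> n}. 1 / (real_of_int (k - n))^2)"
      by (rule infsum_cong) (simp add: unimodular)
    also have "\<dots> = pi^2/3" using has_sum_inverse_squares_int by (rule infsumI)
    finally show ?thesis by (simp only: noise_seq_eq_0_iff)
  qed
  with unimodular show ?thesis by blast
qed

end
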